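(* Let $R\ge1$ and let $\mathbb{G}_1,\dots,\mathbb{G}_R$ be linear arrays with central ULAs $\mathbb{U}_{\mathbb{G}_1},\dots,\mathbb{U}_{\mathbb{G}_R}$ of their difference coarrays. Let $\mathbb{M}_r$ be the multi-generator fractal array built from them, $\mathbb{D}_r$ its difference coarray, $\mathbb{U}_r$ the central ULA of $\mathbb{D}_r$, $N=|\mathbb{M}_r|$ (so $N\le\prod_{i=1}^r|\mathbb{G}_i|$), and $P_r=\prod_{i=1}^r|\mathbb{U}_{\mathbb{G}_i}|$. Then for every $1\le r\le R$, $\left[-\tfrac{P_r-1}{2},\tfrac{P_r-1}{2}\right]\cap\mathbb{Z}\subseteq\mathbb{U}_r$, so $|\mathbb{D}_r|\ge|\mathbb{U}_r|\ge P_r$. Consequently, if there is a constant $c>0$ with $|\mathbb{U}_{\mathbb{G}_i}|\ge c|\mathbb{G}_i|^2$ for all $i$, then $|\mathbb{D}_r|\ge c^rN^2$, i.e. $|\mathbb{D}_r|$ is of order $N^2$ for fixed $r$.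
   Context: A linear array is a finite set $\mathbb{G}\subset\mathbb{Z}$ with $\min\mathbb{G}=0$; its difference coarray is $\mathbb{D}=\{n_1-n_2:n_1,n_2\in\mathbb{G}\}$; its central ULA is the largest set $\{-m,\dots,m\}$ ($m\ge0$) contained in $\mathbb{D}$. Given generators $\mathbb{G}_1,\dots,\mathbb{G}_R$ with central ULAs $\mathbb{U}_{\mathbb{G}_i}$, the multi-generator fractal array is defined by $\mathbb{M}_0=\{0\}$ and $\mathbb{M}_{r+1}=\bigcup_{n\in\mathbb{G}_{r+1}}\big(\mathbb{M}_r+n\prod_{i=1}^{r}|\mathbb{U}_{\mathbb{G}_i}|\big)$ for $0\le r\le R-1$ (empty product $=1$), where $A+t=\{a+t:a\in A\}$. *)

theory Defs
  imports Complex_Main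
begin

definition lin_array :: "int set \<Rightarrow> bool" where
  "lin_array G \<longleftrightarrow> finite G \<and> G \<noteq> {} \<and> Min G = 0"

definition diff_coarray :: "int set \<Rightarrow> int set" where
  "diff_coarray G = {n1 - n2 | n1 n2. n1 \<in> G \<and> n2 \<in> G}"

definition central_ULA :: "int set \<Rightarrow> int set" where
  "central_ULA G = (let m = (GREATEST m::nat. {- int m .. int m} \<subseteq> diff_coarray G)
                    in {- int m .. int m})"

definition ula_prod :: "(nat \<Rightarrow> int set) \<Rightarrow> nat \<Rightarrow> nat" where
  "ula_prod Gs r = (\<Prod>i = 1..r. card (central_ULA (Gs i)))"

fun fractal :: "(nat \<Rightarrow> int set) \<Rightarrow> nat \<Rightarrow> int set" where
  "fractal Gs 0 = {0}"
| "fractal Gs (Suc r) =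
     (\<Union>n\<in>Gs (Suc r). (\<lambda>a. a + n * int (ula_prod Gs r)) ` fractal Gs r)"

end

theory Submission
  imports Defs
begin

text \<open>Every element of \<open>\<M>\<^sub>r\<^sub>+\<^sub>1\<close> is \<open>a + n P\<close> with \<open>a \<in> \<M>\<^sub>r\<close>, \<open>n \<in> \<G>\<^sub>r\<^sub>+\<^sub>1\<close> and
  \<open>P = P\<^sub>r\<close> odd, say \<open>P = 2h + 1\<close>. Splitting an integer \<open>x\<close> with \<open>|x| \<le> P m + h\<close> by balanced
  division into \<open>x = P q + s\<close> with \<open>|s| \<le> h\<close> and \<open>|q| \<le> m\<close> shows that the coarray of
  \<open>\<M>\<^sub>r\<^sub>+\<^sub>1\<close> contains \<open>[-(P m + h), P m + h]\<close> as soon as \<open>[-h, h]\<close> lies in the coarray of \<open>\<M>\<^sub>r\<close>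
  and \<open>[-m, m]\<close> in that of \<open>\<G>\<^sub>r\<^sub>+\<^sub>1\<close>. By induction the central ULA of \<open>\<M>\<^sub>r\<close> has at least
  \<open>P\<^sub>r\<close> elements, and \<open>P\<^sub>r \<ge> c\<^sup>r \<Prod> |\<G>\<^sub>i|\<^sup>2 \<ge> c\<^sup>r N\<^sup>2\<close>.\<close>

lemma diff_coarrayI: "a \<in> X \<Longrightarrow> b \<in> X \<Longrightarrow> a - b \<in> diff_coarray X"
  unfolding diff_coarray_def by blast

lemma finite_diff_coarray:
  assumes "finite X"
  shows "finite (diff_coarray X)"
proof -
  have "diff_coarray X = (\<lambda>(a, b). a - b) ` (X \<times> X)"
    unfolding diff_coarray_def by auto
  then show ?thesis using assms by simp
qed

lemma central_ULA_radius:
  assumes "finite X" "X \<noteq> {}"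
  defines "m \<equiv> GREATEST m::nat. {- int m .. int m} \<subseteq> diff_coarray X"
  shows "central_ULA X = {- int m .. int m}"
    and "{- int m .. int m} \<subseteq> diff_coarray X"
    and "{- int k .. int k} \<subseteq> diff_coarray X \<Longrightarrow> k \<le> m"
proof -
  let ?P = "\<lambda>m::nat. {- int m .. int m} \<subseteq> diff_coarray X"
  have bounded: "k \<le> card (diff_coarray X)" if "?P k" for k
    using card_mono[OF finite_diff_coarray[OF assms(1)] that] by simp
  obtain a where "a \<in> X" using assms(2) by blast
  then have "?P 0" using diff_coarrayI[of a X a] by simp
  then show "?P m"
    unfolding m_def by (rule GreatestI_nat[where b = "card (diff_coarray X)"]) (erule bounded)
  show "?P k \<Longrightarrow> k \<le> m"
    unfolding m_def by (rule Greatest_le_nat[where b = "card (diff_coarray X)"]) (assumption | erule bounded)+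
  show "central_ULA X = {- int m .. int m}"
    unfolding central_ULA_def m_def Let_def ..
qed

lemma central_ULA_eq_interval:
  "finite X \<Longrightarrow> X \<noteq> {} \<Longrightarrow> \<exists>m::nat. central_ULA X = {- int m .. int m}"
  using central_ULA_radius(1) by blast

lemma central_ULA_subset_diff_coarray:
  assumes "finite X" "X \<noteq> {}"
  shows "central_ULA X \<subseteq> diff_coarray X"
  using central_ULA_radius(1,2)[OF assms] by simp

lemma interval_subset_central_ULA:
  assumes "finite X" "X \<noteq> {}" "{- int k .. int k} \<subseteq> diff_coarray X"
  shows "{- int k .. int k} \<subseteq> central_ULA X"
proof -
  note radius = central_ULA_radius[OF assms(1,2)]
  have "k \<le> (GREATEST m::nat. {- int m .. int m} \<subseteq> diff_coarray X)"
    using radius(3) assms(3) .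
  then show ?thesis unfolding radius(1) by auto
qed

lemma odd_card_central_ULA:
  assumes "finite X" "X \<noteq> {}"
  shows "odd (card (central_ULA X))"
proof -
  obtain m where "central_ULA X = {- int m .. int m}"
    using central_ULA_eq_interval[OF assms] by blast
  then have "card (central_ULA X) = 2 * m + 1" by simp
  then show ?thesis by simp
qed

lemma balanced_division:
  fixes x h m :: int
  assumes "0 \<le> h" "\<bar>x\<bar> \<le> (2 * h + 1) * m + h"
  obtains q s where "x = (2 * h + 1) * q + s" "\<bar>s\<bar> \<le> h" "\<bar>q\<bar> \<le> m"
proof
  define P where "P = 2 * h + 1"
  have "P > 0" using assms(1) by (simp add: P_def)
  define q where "q = (x + h) div P"
  define s where "s = (x + h) mod P - h"
  have "x + h = P * q + (x + h) mod P"
    unfolding q_def by (rule mult_div_mod_eq[symmetric])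
  then show "x = (2 * h + 1) * q + s"
    unfolding s_def P_def by linarith
  moreover have "0 \<le> (x + h) mod P" "(x + h) mod P < P" using \<open>P > 0\<close> by simp_all
  ultimately show "\<bar>s\<bar> \<le> h" unfolding s_def P_def by linarith
  have "P * q \<le> x + h" "x + h < P * q + P"
    using \<open>x + h = P * q + (x + h) mod P\<close> \<open>0 \<le> (x + h) mod P\<close> \<open>(x + h) mod P < P\<close>
    by linarith+
  then have "P * (- m) < P * (q + 1)" "P * q < P * (m + 1)"
    using assms(2) by (auto simp: P_def algebra_simps)
  then have "- m < q + 1" "q < m + 1"
    using \<open>P > 0\<close> mult_less_cancel_left_pos by blast+
  then show "\<bar>q\<bar> \<le> m" by simp
qed

lemma interval_subset_diff_coarray_dilated_sumset:
  assumes A: "{- int h .. int h} \<subseteq> diff_coarray A"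
    and G: "{- int m .. int m} \<subseteq> diff_coarray G"
  shows "{- int ((2 * h + 1) * m + h) .. int ((2 * h + 1) * m + h)}
           \<subseteq> diff_coarray (\<Union>n\<in>G. (\<lambda>a. a + n * int (2 * h + 1)) ` A)"
proof
  fix x assume "x \<in> {- int ((2 * h + 1) * m + h) .. int ((2 * h + 1) * m + h)}"
  then have "\<bar>x\<bar> \<le> (2 * int h + 1) * int m + int h" by (simp add: abs_le_iff algebra_simps)
  then obtain q s where x: "x = (2 * int h + 1) * q + s" and "\<bar>s\<bar> \<le> int h" "\<bar>q\<bar> \<le> int m"
    by (rule balanced_division[rotated]) auto
  have "s \<in> diff_coarray A" "q \<in> diff_coarray G"
    using A G \<open>\<bar>s\<bar> \<le> int h\<close> \<open>\<bar>q\<bar> \<le> int m\<close> by (auto simp: abs_le_iff subset_iff)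
  then obtain a b n1 n2 where "a \<in> A" "b \<in> A" "s = a - b" "n1 \<in> G" "n2 \<in> G" "q = n1 - n2"
    unfolding diff_coarray_def by blast
  let ?S = "\<Union>n\<in>G. (\<lambda>a. a + n * int (2 * h + 1)) ` A"
  have "a + n1 * int (2 * h + 1) \<in> ?S" "b + n2 * int (2 * h + 1) \<in> ?S"
    using \<open>a \<in> A\<close> \<open>b \<in> A\<close> \<open>n1 \<in> G\<close> \<open>n2 \<in> G\<close> by blast+
  moreover have "x = (a + n1 * int (2 * h + 1)) - (b + n2 * int (2 * h + 1))"
    using x \<open>s = a - b\<close> \<open>q = n1 - n2\<close> by (simp add: algebra_simps)
  ultimately show "x \<in> diff_coarray ?S"
    by (simp add: diff_coarrayI)
qed

lemma lin_array_finite_nonempty: "lin_array G \<Longrightarrow> finite G \<and> G \<noteq> {}"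
  unfolding lin_array_def by blast

lemma ula_prod_Suc:
  "ula_prod Gs (Suc r) = card (central_ULA (Gs (Suc r))) * ula_prod Gs r"
  by (simp add: ula_prod_def prod.nat_ivl_Suc')

lemma finite_fractal:
  "\<forall>i\<in>{1..r}. lin_array (Gs i) \<Longrightarrow> finite (fractal Gs r) \<and> fractal Gs r \<noteq> {}"
proof (induction r)
  case (Suc r)
  then have "finite (Gs (Suc r))" "Gs (Suc r) \<noteq> {}"
    using lin_array_finite_nonempty by auto
  with Suc show ?case by force
qed simp

lemma card_fractal_le:
  "\<forall>i\<in>{1..r}. lin_array (Gs i) \<Longrightarrow> card (fractal Gs r) \<le> (\<Prod>i = 1..r. card (Gs i))"
proof (induction r)
  case (Suc r)
  have "finite (Gs (Suc r))" using Suc.prems lin_array_finite_nonempty by simp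
  then have "card (fractal Gs (Suc r))
      \<le> (\<Sum>n\<in>Gs (Suc r). card ((\<lambda>a. a + n * int (ula_prod Gs r)) ` fractal Gs r))"
    using card_UN_le by simp
  also have "\<dots> \<le> (\<Sum>n\<in>Gs (Suc r). card (fractal Gs r))"
    by (intro sum_mono card_image_le) (use finite_fractal Suc.prems in simp)
  also have "\<dots> = card (Gs (Suc r)) * card (fractal Gs r)"
    by simp
  also have "\<dots> \<le> card (Gs (Suc r)) * (\<Prod>i = 1..r. card (Gs i))"
    using Suc by simp
  finally show ?case by (simp add: prod.nat_ivl_Suc' mult.commute)
qed simp

lemma odd_ula_prod: "\<forall>i\<in>{1..r}. lin_array (Gs i) \<Longrightarrow> odd (ula_prod Gs r)"
proof (induction r)
  case (Suc r)
  then show ?case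
    using odd_card_central_ULA lin_array_finite_nonempty by (simp add: ula_prod_Suc)
qed (simp add: ula_prod_def)

lemma interval_subset_diff_coarray_fractal:
  "\<forall>i\<in>{1..r}. lin_array (Gs i) \<Longrightarrow> ula_prod Gs r = 2 * h + 1 \<Longrightarrow>
     {- int h .. int h} \<subseteq> diff_coarray (fractal Gs r)"
proof (induction r arbitrary: h)
  case 0
  then show ?case using diff_coarrayI[of 0 "{0}" 0] by (simp add: ula_prod_def)
next
  case (Suc r)
  obtain h' where h': "ula_prod Gs r = 2 * h' + 1"
    using odd_ula_prod Suc.prems(1) by (metis atLeastAtMost_iff le_SucI oddE)
  have "finite (Gs (Suc r))" "Gs (Suc r) \<noteq> {}"
    using Suc.prems(1) lin_array_finite_nonempty by auto
  then obtain m where m: "central_ULA (Gs (Suc r)) = {- int m .. int m}"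
    using central_ULA_eq_interval by blast
  then have "card (central_ULA (Gs (Suc r))) = 2 * m + 1"
    by simp
  then have "h = (2 * h' + 1) * m + h'"
    using Suc.prems(2) h' by (simp add: ula_prod_Suc algebra_simps)
  moreover have "{- int m .. int m} \<subseteq> diff_coarray (Gs (Suc r))"
    using central_ULA_subset_diff_coarray \<open>finite (Gs (Suc r))\<close> \<open>Gs (Suc r) \<noteq> {}\<close> m by metis
  moreover have "{- int h' .. int h'} \<subseteq> diff_coarray (fractal Gs r)"
    using Suc h' by simp
  ultimately show ?case
    using interval_subset_diff_coarray_dilated_sumset h' by simp
qed

lemma power_mult_card_squared_le_ula_prod:
  fixes c :: real
  assumes "c \<ge> 0"
    and "\<forall>i \<in> {1..r}. real (card (central_ULA (Gs i))) \<ge> c * real (card (Gs i)) ^ 2"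
    and "card M \<le> (\<Prod>i = 1..r. card (Gs i))"
  shows "c ^ r * real (card M) ^ 2 \<le> real (ula_prod Gs r)"
proof -
  have "c ^ r * real (card M) ^ 2 \<le> c ^ r * (\<Prod>i = 1..r. real (card (Gs i))) ^ 2"
    using assms(1,3) by (intro mult_left_mono power_mono) (auto simp flip: of_nat_prod)
  also have "\<dots> = (\<Prod>i = 1..r. c * real (card (Gs i)) ^ 2)"
    by (simp add: prod.distrib prod_power_distrib)
  also have "\<dots> \<le> (\<Prod>i = 1..r. real (card (central_ULA (Gs i))))"
    using assms(1,2) by (intro prod_mono) auto
  finally show ?thesis by (simp add: ula_prod_def)
qed

theorem theorem9:
  fixes R :: nat and Gs :: "nat \<Rightarrow> int set"
  assumes "R \<ge> 1"
    and "\<forall>i \<in> {1..R}. lin_array (Gs i)"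
  shows "\<forall>r \<in> {1..R}.
           card (fractal Gs r) \<le> (\<Prod>i = 1..r. card (Gs i))
         \<and> {x::int. - (real (ula_prod Gs r) - 1) / 2 \<le> real_of_int x
                  \<and> real_of_int x \<le> (real (ula_prod Gs r) - 1) / 2}
             \<subseteq> central_ULA (fractal Gs r)
         \<and> card (diff_coarray (fractal Gs r)) \<ge> card (central_ULA (fractal Gs r))
         \<and> card (central_ULA (fractal Gs r)) \<ge> ula_prod Gs r
         \<and> (\<forall>c::real. c > 0 \<longrightarrow>
               (\<forall>i \<in> {1..R}. real (card (central_ULA (Gs i))) \<ge> c * real (card (Gs i)) ^ 2) \<longrightarrow>
               real (card (diff_coarray (fractal Gs r))) \<ge> c ^ r * real (card (fractal Gs r)) ^ 2)"
proof (intro ballI conjI allI impI)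
  fix r assume "r \<in> {1..R}"
  then have lin: "\<forall>i\<in>{1..r}. lin_array (Gs i)" using assms(2) by auto
  let ?M = "fractal Gs r"
  have M: "finite ?M" "?M \<noteq> {}" using finite_fractal[OF lin] by auto
  obtain h where h: "ula_prod Gs r = 2 * h + 1" using odd_ula_prod[OF lin] oddE by blast
  have ULA: "{- int h .. int h} \<subseteq> central_ULA ?M"
    using interval_subset_central_ULA[OF M interval_subset_diff_coarray_fractal[OF lin h]] .
  show card_M: "card ?M \<le> (\<Prod>i = 1..r. card (Gs i))" using card_fractal_le[OF lin] .
  show "{x::int. - (real (ula_prod Gs r) - 1) / 2 \<le> real_of_int x
                  \<and> real_of_int x \<le> (real (ula_prod Gs r) - 1) / 2} \<subseteq> central_ULA ?M"
    using ULA by (auto simp: h)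
  show D: "card (central_ULA ?M) \<le> card (diff_coarray ?M)"
    using card_mono[OF finite_diff_coarray central_ULA_subset_diff_coarray] M by blast
  show U: "ula_prod Gs r \<le> card (central_ULA ?M)"
    using card_mono[OF _ ULA] central_ULA_eq_interval[OF M] h by auto
  fix c :: real
  assume "c > 0" "\<forall>i \<in> {1..R}. real (card (central_ULA (Gs i))) \<ge> c * real (card (Gs i)) ^ 2"
  then have "c ^ r * real (card ?M) ^ 2 \<le> real (ula_prod Gs r)"
    using \<open>r \<in> {1..R}\<close> card_M by (intro power_mult_card_squared_le_ula_prod) auto
  then show "c ^ r * real (card ?M) ^ 2 \<le> real (card (diff_coarray ?M))"
    using D U by linarith
qed

end
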